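(* Let $\tau_1(x)=\frac{x+1}{x+3}$ and $\tau_2(x)=\frac{2}{4-x}$ on $[0,1]$ (so $\tau_1([0,1])=[1/3,1/2]$, $\tau_2([0,1])=[1/2,2/3]$), and let $A_1(y)=\frac12\left(\log\frac{2}{(y-1)^2}+\log 2\right)$ (used on $\tau_1([0,1])$) and $A_2(y)=\frac12\left(\log\frac{2}{y^2}+\log 2\right)$ (used on $\tau_2([0,1])$). Let $b=\frac{3+\sqrt{17}}{2}$ and $V(x)=\max\{\log(x+b),\log(1-x+b)\}$. Then for every $x\in[0,1]$, $$V(x)+\log b=\max\{A_1(\tau_1(x))+V(\tau_1(x)),\,A_2(\tau_2(x))+V(\tau_2(x))\},$$ i.e. $V$ is a subaction for this potential with maximal value $m(A)=\log\left(\frac{3+\sqrt{17}}{2}\right)$.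
   Context: This is the potential associated (in the ergodic-optimization approach to the joint spectral radius) with the pair of matrices $A_1=\begin{pmatrix}2&1\\2&2\end{pmatrix}$, $A_2=\begin{pmatrix}2&2\\1&2\end{pmatrix}$, whose projective actions on $[0,1]$ are $\tau_1,\tau_2$. Here "subaction with constant $c$" means a continuous $V$ satisfying $V(x)+c=\max_{i}[A_i(\tau_i(x))+V(\tau_i(x))]$ for all $x$. *)

theory Defs
  imports Complex_Main
begin

definition tau1 :: "real \<Rightarrow> real" where
  "tau1 x = (x + 1) / (x + 3)"

definition tau2 :: "real \<Rightarrow> real" where
  "tau2 x = 2 / (4 - x)"

definition A1 :: "real \<Rightarrow> real" where
  "A1 y = (ln (2 / (y - 1)^2) + ln 2) / 2"

definition A2 :: "real \<Rightarrow> real" where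
  "A2 y = (ln (2 / y^2) + ln 2) / 2"

definition bconst :: real where
  "bconst = (3 + sqrt 17) / 2"

definition V :: "real \<Rightarrow> real" where
  "V x = max (ln (x + bconst)) (ln (1 - x + bconst))"

end

theory Submission
  imports Defs
begin

text \<open>On \<open>[0,1]\<close> the potentials simplify to \<open>A\<^sub>1(y) = ln (2/(1 - y))\<close> and \<open>A\<^sub>2(y) = ln (2/y)\<close>,
  and \<open>\<tau>\<^sub>1\<close>, \<open>\<tau>\<^sub>2\<close> land in \<open>[0,1/2]\<close> and \<open>[1/2,1]\<close>, where \<open>V\<close> is given by its second and first
  branch respectively. So both terms on the right are logarithms of affine functions of \<open>x\<close>, and since
  \<open>b\<^sup>2 = 3b + 2\<close> these are exactly \<open>(x + 3)(1 + b) - (x + 1) = b (x + b)\<close> and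
  \<open>2 + b (4 - x) = b (1 - x + b)\<close>: the two branches of the Bellman equation match the two
  branches of \<open>V x + ln b\<close> one by one.\<close>

lemma bconst_pos: "bconst > 0"
  unfolding bconst_def by (simp add: add_pos_nonneg)

lemma bconst_squared: "bconst\<^sup>2 = 3 * bconst + 2"
  unfolding bconst_def by (simp add: power2_eq_square algebra_simps)

lemma half_ln_two_div_square:
  fixes u :: real
  assumes "u > 0"
  shows "(ln (2 / u\<^sup>2) + ln 2) / 2 = ln (2 / u)"
proof -
  have "ln (2 / u\<^sup>2) + ln 2 = ln (2 / u\<^sup>2 * 2)"
    using assms by (intro ln_mult_pos[symmetric]) simp_all
  also have "2 / u\<^sup>2 * 2 = (2 / u)\<^sup>2"
    by (simp add: power_divide)
  also have "ln ((2 / u)\<^sup>2) = 2 * ln (2 / u)"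
    by (simp add: ln_realpow)
  finally show ?thesis by simp
qed

lemma A1_eq: "y < 1 \<Longrightarrow> A1 y = ln (2 / (1 - y))"
  unfolding A1_def by (simp add: half_ln_two_div_square power2_commute)

lemma A2_eq: "y > 0 \<Longrightarrow> A2 y = ln (2 / y)"
  unfolding A2_def by (simp add: half_ln_two_div_square)

lemma V_eq_of_le_half: "0 \<le> y \<Longrightarrow> y \<le> 1 / 2 \<Longrightarrow> V y = ln (1 - y + bconst)"
  unfolding V_def using bconst_pos by (intro max_absorb2) simp

lemma V_eq_of_ge_half: "1 / 2 \<le> y \<Longrightarrow> y \<le> 1 \<Longrightarrow> V y = ln (y + bconst)"
  unfolding V_def using bconst_pos by (intro max_absorb1) simp

lemma A1_tau1_plus_V_tau1:
  fixes x :: real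
  assumes "0 \<le> x" "x \<le> 1"
  shows "A1 (tau1 x) + V (tau1 x) = ln bconst + ln (x + bconst)"
proof -
  have one_minus_tau1: "1 - tau1 x = 2 / (x + 3)"
    using assms by (simp add: tau1_def field_simps)
  have "0 < 2 / (x + 3)"
    using assms by simp
  then have "A1 (tau1 x) = ln (2 / (1 - tau1 x))"
    using one_minus_tau1 by (intro A1_eq) linarith
  also have "\<dots> = ln (x + 3)"
    using assms by (simp add: one_minus_tau1)
  finally have "A1 (tau1 x) = ln (x + 3)" .
  moreover have "V (tau1 x) = ln (2 / (x + 3) + bconst)"
    using assms by (subst V_eq_of_le_half) (simp_all add: tau1_def field_simps)
  ultimately have "A1 (tau1 x) + V (tau1 x) = ln ((x + 3) * (2 / (x + 3) + bconst))"
    using assms bconst_pos by (simp add: ln_mult_pos add_pos_pos)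
  also have "(x + 3) * (2 / (x + 3) + bconst) = bconst * (x + bconst)"
    using assms bconst_squared by (simp add: field_simps power2_eq_square)
  finally show ?thesis
    using assms bconst_pos by (simp add: ln_mult_pos)
qed

lemma A2_tau2_plus_V_tau2:
  fixes x :: real
  assumes "0 \<le> x" "x \<le> 1"
  shows "A2 (tau2 x) + V (tau2 x) = ln bconst + ln (1 - x + bconst)"
proof -
  have "A2 (tau2 x) = ln (4 - x)"
    using assms by (simp add: A2_eq tau2_def)
  moreover have "V (tau2 x) = ln (2 / (4 - x) + bconst)"
    using assms by (subst V_eq_of_ge_half) (simp_all add: tau2_def field_simps)
  ultimately have "A2 (tau2 x) + V (tau2 x) = ln ((4 - x) * (2 / (4 - x) + bconst))"
    using assms bconst_pos by (simp add: ln_mult_pos add_pos_pos)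
  also have "(4 - x) * (2 / (4 - x) + bconst) = bconst * (1 - x + bconst)"
    using assms bconst_squared by (simp add: field_simps power2_eq_square)
  finally show ?thesis
    using assms bconst_pos by (simp add: ln_mult_pos)
qed

theorem mainTheorem3:
  fixes x :: real
  assumes "0 \<le> x" and "x \<le> 1"
  shows "V x + ln bconst = max (A1 (tau1 x) + V (tau1 x)) (A2 (tau2 x) + V (tau2 x))"
proof -
  have "V x + ln bconst = max (ln bconst + ln (x + bconst)) (ln bconst + ln (1 - x + bconst))"
    unfolding V_def by (simp add: max_add_distrib_left add.commute)
  then show ?thesis
    using A1_tau1_plus_V_tau1[OF assms] A2_tau2_plus_V_tau2[OF assms] by simp
qed

end
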